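(* Let $l,m,k$ be non-negative integers with $2l\le m\le 2k$, and let $d$ be an integer with $0\le d\le k+l-m$. Then $$\sum_{i=0}^{k+l-m-d}P\big((0,0),(i,i+d)\big)\,P\big((i+l,i+d+m-l),(k,k)\big)=\binom{2k-m+1}{k-m+l-d}-\binom{2k-m+1}{k-m+l-d-1}.$$
   Context: A NE upper path is a lattice path in $\mathbb{Z}^2$ each of whose steps is either $(0,1)$ (North) or $(1,0)$ (East), and which never visits a point $(x,y)$ with $y<x$. For points $(x_1,y_1),(x_2,y_2)\in\mathbb{Z}^2$, $P((x_1,y_1),(x_2,y_2))$ denotes the number of NE upper paths from $(x_1,y_1)$ to $(x_2,y_2)$ (this is $0$ if no such path exists). Convention: $\binom{x}{y}=0$ for integers $x\ge 0$ and $y<0$. *)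

theory Defs
  imports Main
begin

text \<open>A step is encoded as a boolean: True = North (0,1), False = East (1,0).
  The list of lattice points visited by the path starting at p with the given steps
  (including the start point).\<close>
fun path_points :: "int \<times> int \<Rightarrow> bool list \<Rightarrow> (int \<times> int) list" where
  "path_points p [] = [p]"
| "path_points (x, y) (b # bs) =
     (x, y) # path_points (if b then (x, y + 1) else (x + 1, y)) bs"

definition ne_upper_paths :: "int \<times> int \<Rightarrow> int \<times> int \<Rightarrow> bool list set" where
  "ne_upper_paths a b =
     {s. length s = nat ((fst b - fst a) + (snd b - snd a))
         \<and> last (path_points a s) = b
         \<and> (\<forall>q\<in>set (path_points a s). fst q \<le> snd q)}"

definition P :: "int \<times> int \<Rightarrow> int \<times> int \<Rightarrow> nat" where
  "P a b = card (ne_upper_paths a b)"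

text \<open>Binomial coefficient on integer arguments with the convention binom x y = 0 for y < 0
  (used only with x \<ge> 0).\<close>
definition binom :: "int \<Rightarrow> int \<Rightarrow> int" where
  "binom x y = (if y < 0 then 0 else int (nat x choose nat y))"

end

theory Submission
  imports Defs
begin

text \<open>Both the number of NE upper paths and the reflection-principle count
  \<open>C(p+q, p) - C(p+q, p-u-1)\<close> (for a path making \<open>p\<close> East and \<open>q\<close> North steps from a point
  \<open>u\<close> above the diagonal) satisfy the first-step recursion with the same boundary values,
  so they agree. Both factors of the sum are therefore ballot numbers
  \<open>B(n, e) = C(2n+e, n) - C(2n+e, n-1)\<close>, and the sum is the convolution identity
  \<open>\<Sum>i. B(i, d) B(n-i, e) = B(n, d+e+1)\<close>, proved by induction on \<open>n\<close> and \<open>e\<close> from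
  \<open>B(n, e+1) = B(n, e) + B(n-1, e+2)\<close>, i.e. Pascal's rule.\<close>

lemma path_points_neq_Nil [simp]: "path_points p s \<noteq> []"
  by (cases p; cases s) auto

lemma last_path_points:
  "last (path_points (x, y) s) = (x + int (length (filter Not s)), y + int (length (filter id s)))"
  by (induction s arbitrary: x y) auto

lemma start_in_path_points: "(x, y) \<in> set (path_points (x, y) s)"
  by (cases s) auto

lemma ne_upper_paths_nonempty_imp:
  assumes "s \<in> ne_upper_paths (x, y) (x2, y2)"
  shows "x \<le> x2 \<and> y \<le> y2 \<and> x \<le> y"
  using assms start_in_path_points[of x y s] last_path_points[of x y s]
  unfolding ne_upper_paths_def by auto

lemma finite_ne_upper_paths: "finite (ne_upper_paths a b)"
proof (rule finite_subset)
  show "ne_upper_paths a b \<subseteq> {s. set s \<subseteq> UNIV \<and> length s = nat ((fst b - fst a) + (snd b - snd a))}"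
    unfolding ne_upper_paths_def by auto
qed (rule finite_lists_length_eq, simp)

lemma P_eq_0: "\<not> (x \<le> x2 \<and> y \<le> y2 \<and> x \<le> y) \<Longrightarrow> P (x, y) (x2, y2) = 0"
  unfolding P_def using ne_upper_paths_nonempty_imp[of _ x y x2 y2] by (metis card.empty equals0I)

lemma ne_upper_paths_refl: "x \<le> y \<Longrightarrow> ne_upper_paths (x, y) (x, y) = {[]}"
  unfolding ne_upper_paths_def by auto

lemma ne_upper_paths_first_step:
  assumes "x \<le> y" "1 \<le> (x2 - x) + (y2 - y)"
  shows "ne_upper_paths (x, y) (x2, y2) =
    Cons True ` ne_upper_paths (x, y + 1) (x2, y2) \<union> Cons False ` ne_upper_paths (x + 1, y) (x2, y2)"
proof (rule set_eqI)
  fix s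
  show "s \<in> ne_upper_paths (x, y) (x2, y2) \<longleftrightarrow>
    s \<in> Cons True ` ne_upper_paths (x, y + 1) (x2, y2) \<union> Cons False ` ne_upper_paths (x + 1, y) (x2, y2)"
    using assms unfolding ne_upper_paths_def
    by (cases s; cases "hd s") auto
qed

lemma P_first_step:
  assumes "x \<le> y" "1 \<le> (x2 - x) + (y2 - y)"
  shows "P (x, y) (x2, y2) = P (x, y + 1) (x2, y2) + P (x + 1, y) (x2, y2)"
  unfolding P_def ne_upper_paths_first_step[OF assms]
  by (subst card_Un_disjoint) (auto simp: finite_ne_upper_paths card_image)

lemma binom_neg: "k < 0 \<Longrightarrow> binom n k = 0"
  unfolding binom_def by simp

lemma binom_eq_0_gt: "0 \<le> n \<Longrightarrow> n < k \<Longrightarrow> binom n k = 0"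
  unfolding binom_def by simp

lemma binom_Suc_left:
  assumes "0 \<le> n"
  shows "binom (n + 1) k = binom n k + binom n (k - 1)"
proof -
  consider "k < 0" | "k = 0" | "0 < k" by linarith
  then show ?thesis
  proof cases
    case 3
    have "nat (n + 1) = Suc (nat n)" "nat k = Suc (nat (k - 1))"
      using assms 3 by simp_all
    then show ?thesis using 3 unfolding binom_def by simp
  qed (use assms in \<open>simp_all add: binom_def nat_add_distrib\<close>)
qed

lemma binom_symmetric: "0 \<le> n \<Longrightarrow> binom n k = binom n (n - k)"
proof -
  assume n: "0 \<le> n"
  consider "k < 0" | "n < k" | "0 \<le> k \<and> k \<le> n" by linarith
  then show ?thesis
  proof cases
    case 3
    then have "nat (n - k) = nat n - nat k" by (simp add: nat_diff_distrib)
    then show ?thesis using 3 n unfolding binom_def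
      by (simp add: binomial_symmetric[of "nat k" "nat n"] nat_mono)
  qed (use n in \<open>auto simp: binom_def\<close>)
qed

definition upper_path_count :: "int \<Rightarrow> int \<Rightarrow> int \<Rightarrow> int" where
  "upper_path_count p q u = binom (p + q) p - binom (p + q) (p - u - 1)"

lemma upper_path_count_0_0: "0 \<le> u \<Longrightarrow> upper_path_count 0 0 u = 1"
  unfolding upper_path_count_def by (simp add: binom_def)

lemma upper_path_count_first_step:
  assumes "0 \<le> p" "0 \<le> q" "0 \<le> u" "p \<le> q + u" "1 \<le> p + q"
  shows "upper_path_count p q u =
    (if 1 \<le> q then upper_path_count p (q - 1) (u + 1) else 0) +
    (if 1 \<le> p \<and> 1 \<le> u then upper_path_count (p - 1) q (u - 1) else 0)"
proof -
  define M where "M = p + q - 1"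
  have M: "0 \<le> M" "p + q = M + 1" "p - 1 + q = M" "p + (q - 1) = M"
    using assms unfolding M_def by auto
  have Pascal: "binom (M + 1) p = binom M p + binom M (p - 1)"
    "binom (M + 1) (p - u - 1) = binom M (p - u - 1) + binom M (p - u - 1 - 1)"
    using binom_Suc_left[OF \<open>0 \<le> M\<close>] by simp_all
  consider "q = 0" | "1 \<le> q" "u = 0" | "1 \<le> q" "p = 0" | "1 \<le> q" "1 \<le> p" "1 \<le> u"
    using assms by linarith
  then show ?thesis
  proof cases
    case 1
    \<comment> \<open>a path already on the final row can only go East, so its North part vanishes\<close>
    then have "p = M + 1" "binom M p = 0" "binom M (p - u - 1 - 1) = 0"
      using M assms by (auto intro: binom_eq_0_gt binom_neg)
    with 1 assms Pascal show ?thesis unfolding upper_path_count_def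
      by (simp add: algebra_simps)
  qed (use assms M Pascal in \<open>simp_all add: upper_path_count_def binom_neg algebra_simps\<close>)
qed

lemma P_eq_upper_path_count:
  assumes "x \<le> y" "x \<le> x2" "y \<le> y2" "x2 \<le> y2"
  shows "int (P (x, y) (x2, y2)) = upper_path_count (x2 - x) (y2 - y) (y - x)"
  using assms
proof (induction "nat ((x2 - x) + (y2 - y))" arbitrary: x y)
  case 0
  then have "x = x2" "y = y2" by auto
  then show ?case using 0 by (simp add: P_def ne_upper_paths_refl upper_path_count_0_0)
next
  case (Suc N)
  have north: "int (P (x, y + 1) (x2, y2)) =
      (if 1 \<le> y2 - y then upper_path_count (x2 - x) (y2 - y - 1) (y - x + 1) else 0)"
    using Suc.hyps(1)[of x "y + 1"] Suc.hyps(2) Suc.prems P_eq_0[of x x2 "y + 1" y2]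
    by (auto simp: algebra_simps)
  have east: "int (P (x + 1, y) (x2, y2)) =
      (if 1 \<le> x2 - x \<and> 1 \<le> y - x then upper_path_count (x2 - x - 1) (y2 - y) (y - x - 1) else 0)"
    using Suc.hyps(1)[of "x + 1" y] Suc.hyps(2) Suc.prems P_eq_0[of "x + 1" x2 y y2]
    by (auto simp: algebra_simps)
  show ?case
    using P_first_step[of x y x2 y2] upper_path_count_first_step[of "x2 - x" "y2 - y" "y - x"]
      Suc.hyps(2) Suc.prems north east
    by simp
qed

definition ballot :: "nat \<Rightarrow> nat \<Rightarrow> int" where
  "ballot n e = binom (int (2 * n + e)) (int n) - binom (int (2 * n + e)) (int n - 1)"

lemma ballot_0: "ballot 0 e = 1"
  unfolding ballot_def by (simp add: binom_def)

lemma ballot_Suc_Suc: "ballot (Suc n) (Suc e) = ballot (Suc n) e + ballot n (e + 2)"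
proof -
  have "int (2 * Suc n + Suc e) = int (2 * Suc n + e) + 1" "int (2 * n + (e + 2)) = int (2 * Suc n + e)"
    by simp_all
  then show ?thesis unfolding ballot_def
    using binom_Suc_left[of "int (2 * Suc n + e)" "int (Suc n)"]
      binom_Suc_left[of "int (2 * Suc n + e)" "int (Suc n) - 1"]
    by simp
qed

lemma ballot_Suc_0: "ballot (Suc n) 0 = ballot n 1"
proof -
  have "int (2 * Suc n + 0) = int (2 * n + 1) + 1" by simp
  moreover have "binom (int (2 * n + 1)) (int (Suc n)) = binom (int (2 * n + 1)) (int n)"
    using binom_symmetric[of "int (2 * n + 1)" "int (Suc n)"] by simp
  ultimately show ?thesis unfolding ballot_def
    using binom_Suc_left[of "int (2 * n + 1)" "int (Suc n)"]
      binom_Suc_left[of "int (2 * n + 1)" "int (Suc n) - 1"]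
    by simp
qed

lemma ballot_Suc_right: "ballot n (Suc e) = ballot n e + (if n = 0 then 0 else ballot (n - 1) (e + 2))"
  by (cases n) (simp_all add: ballot_0 ballot_Suc_Suc)

lemma ballot_convolution: "(\<Sum>i\<le>n. ballot i d * ballot (n - i) e) = ballot n (d + e + 1)"
proof (induction n arbitrary: d e)
  case 0
  then show ?case by (simp add: ballot_0)
next
  case (Suc n)
  note IH_n = Suc.IH
  show ?case
  proof (induction e)
    case 0
    have "(\<Sum>i\<le>Suc n. ballot i d * ballot (Suc n - i) 0) = (\<Sum>i\<le>n. ballot i d * ballot (n - i) 1) + ballot (Suc n) d"
      by (auto simp: ballot_0 ballot_Suc_0 Suc_diff_le intro!: sum.cong)
    then show ?case using IH_n[of d 1] ballot_Suc_Suc[of n d] by simp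
  next
    case (Suc e)
    have "(\<Sum>i\<le>Suc n. ballot i d * ballot (Suc n - i) (Suc e))
        = (\<Sum>i\<le>Suc n. ballot i d * ballot (Suc n - i) e)
          + (\<Sum>i\<le>Suc n. ballot i d * (if Suc n - i = 0 then 0 else ballot (Suc n - i - 1) (e + 2)))"
      by (simp add: ballot_Suc_right[of _ e] distrib_left sum.distrib del: ballot_Suc_Suc)
    also have "(\<Sum>i\<le>Suc n. ballot i d * (if Suc n - i = 0 then 0 else ballot (Suc n - i - 1) (e + 2)))
        = (\<Sum>i\<le>n. ballot i d * ballot (n - i) (e + 2))"
      unfolding sum.atMost_Suc by (auto intro!: sum.cong simp: Suc_diff_le simp del: ballot_Suc_Suc)
    finally show ?case using Suc.IH IH_n[of d "e + 2"] ballot_Suc_Suc[of n "d + e + 1"] by simp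
  qed
qed

lemma P_from_origin_eq_ballot: "int (P (0, 0) (int n, int n + int e)) = ballot n e"
  using P_eq_upper_path_count[of 0 0 "int n" "int n + int e"]
  unfolding ballot_def upper_path_count_def by (simp add: algebra_simps)

lemma P_to_diagonal_eq_ballot:
  assumes "y = x + int e" "z = x + int n + int e"
  shows "int (P (x, y) (z, z)) = ballot n e"
proof -
  have "int (P (x, y) (z, z)) = upper_path_count (int n + int e) (int n) (int e)"
    using P_eq_upper_path_count[of x y z z] assms by simp
  also have "\<dots> = ballot n e"
    using binom_symmetric[of "int (2 * n + e)" "int n + int e"]
    unfolding upper_path_count_def ballot_def by (simp add: algebra_simps)
  finally show ?thesis .
qed

lemma sum_int_interval_eq_sum_atMost:
  "0 \<le> n \<Longrightarrow> (\<Sum>i = 0..n. f i) = (\<Sum>j\<le>nat n. f (int j))"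
  by (rule sum.reindex_bij_witness[of _ int nat]) auto

theorem mainTheorem5:
  fixes l m k d :: int
  assumes "0 \<le> l" "0 \<le> m" "0 \<le> k"
    and "2 * l \<le> m" "m \<le> 2 * k"
    and "0 \<le> d" "d \<le> k + l - m"
  shows "(\<Sum>i = 0..k + l - m - d.
            int (P (0, 0) (i, i + d)) * int (P (i + l, i + d + m - l) (k, k)))
         = binom (2 * k - m + 1) (k - m + l - d) - binom (2 * k - m + 1) (k - m + l - d - 1)"
proof -
  define N where "N = nat (k + l - m - d)"
  define D where "D = nat d"
  define E where "E = nat (d + m - 2 * l)"
  have N: "int N = k + l - m - d" and D: "d = int D" and E: "d + m - 2 * l = int E"
    using assms unfolding N_def D_def E_def by auto
  have "(\<Sum>i = 0..k + l - m - d. int (P (0, 0) (i, i + d)) * int (P (i + l, i + d + m - l) (k, k)))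
      = (\<Sum>j\<le>N. int (P (0, 0) (int j, int j + d)) * int (P (int j + l, int j + d + m - l) (k, k)))"
    using assms by (simp add: sum_int_interval_eq_sum_atMost N_def)
  also have "\<dots> = (\<Sum>j\<le>N. ballot j D * ballot (N - j) E)"
  proof (rule sum.cong)
    fix j assume "j \<in> {..N}"
    then have "int (P (int j + l, int j + d + m - l) (k, k)) = ballot (N - j) E"
      using N E by (intro P_to_diagonal_eq_ballot) (simp_all add: of_nat_diff)
    then show "int (P (0, 0) (int j, int j + d)) * int (P (int j + l, int j + d + m - l) (k, k))
        = ballot j D * ballot (N - j) E"
      by (simp add: D P_from_origin_eq_ballot)
  qed simp
  also have "\<dots> = ballot N (D + E + 1)" by (rule ballot_convolution)
  also have "\<dots> = binom (2 * k - m + 1) (k - m + l - d) - binom (2 * k - m + 1) (k - m + l - d - 1)"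
  proof -
    have "int (2 * N + (D + E + 1)) = 2 * k - m + 1" "int N = k - m + l - d"
      using N D E by simp_all
    then show ?thesis unfolding ballot_def by (simp only:)
  qed
  finally show ?thesis .
qed

end
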